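(* Let $P\subset\mathbb R^n$ be a bounded open convex set, let $\phi\in\mathcal W(P)$, and suppose $\inf_P\phi=\phi(y)=-1$ for some $y\in\overline P$. Then $\sup_P\phi=\frac1n$ and $$P^\phi_a:=\{x\in P:\phi(x)<a\}=\frac{1-an}{1+n}\,y+\frac{na+n}{1+n}\,P\qquad\text{for every } -1<a<\tfrac1n .$$
   Context: $\mu$ denotes Lebesgue measure on $\mathbb R^n$. A convex function $f:P\to\mathbb R$ is identified with its lower semicontinuous extension $f:\overline P\to(-\infty,\infty]$, which is convex; in particular $\inf_P f$ is attained at some point of $\overline P$, and $f(y)$ for $y\in\overline P$ refers to this extension. The set of extremizers is $$\mathcal W(P):=\Big\{\psi:P\to\mathbb R\text{ convex}:\ \int_P\psi\,d\mu=0,\ -\frac{2}{n+1}\Big(\frac{n}{n+1}\Big)^n\inf_P\psi=\frac{1}{\mu(P)}\int_P|\psi|\,d\mu\Big\}.$$ For sets $A\subset\mathbb R^n$, $y\in\mathbb R^n$ and scalars $s,r$, $s\,y+rA=\{sy+ra:a\in A\}$. *)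

theory Defs
  imports "HOL-Analysis.Analysis"
begin

text \<open>Lower semicontinuous extension of a function on P to the closure of P,
  valued in the extended reals: the lower limit of f(x) as x tends to y within P.\<close>
definition lsc_ext :: "'a::euclidean_space set \<Rightarrow> ('a \<Rightarrow> real) \<Rightarrow> 'a \<Rightarrow> ereal" where
  "lsc_ext P f y = Liminf (at y within P) (\<lambda>x. ereal (f x))"

definition extremizers :: "'a::euclidean_space set \<Rightarrow> ('a \<Rightarrow> real) set" where
  "extremizers P = {\<psi>. convex_on P \<psi> \<and> \<psi> absolutely_integrable_on P \<and>
      integral P \<psi> = 0 \<and>
      - (2 / (real DIM('a) + 1)) * (real DIM('a) / (real DIM('a) + 1)) ^ DIM('a)
          * (INF x\<in>P. \<psi> x)
        = integral P (\<lambda>x. \<bar>\<psi> x\<bar>) / measure lebesgue P}"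

end

theory Submission
  imports Defs
begin

(* Write H_t for the homothety with centre y and ratio t. Convexity of phi and the boundary
   value -1 at y give phi (H_t x) + 1 <= t (phi x + 1) for 0 < t <= 1. Integrating the defect of
   this inequality over P, changing variables by H_t (Jacobian t^n) and splitting phi into its
   positive and negative parts shows  int_P |phi| >= 2 (1 - t) t^n |P|. For t = n/(n+1) this is
   the extremizer identity, so equality holds throughout: phi (H_t x) + 1 = t (phi x + 1),
   phi <= 0 on H_t P and phi >= 0 off its closure. Self-similarity for this single ratio together
   with the subhomogeneity above makes phi + 1 positively homogeneous about y. Hence
   {phi < 0} = H_t P, every sublevel set {phi < a} is the copy H_(t (a + 1)) P, and the supremum
   is 1/t - 1 = 1/n because a bounded open set is no homothetic copy of itself with ratio < 1. *)

definition homothety :: "'a::real_vector \<Rightarrow> real \<Rightarrow> 'a \<Rightarrow> 'a" where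
  "homothety c t x = (1 - t) *\<^sub>R c + t *\<^sub>R x"

lemma homothety_1 [simp]: "homothety c 1 x = x"
  by (simp add: homothety_def)

lemma homothety_homothety [simp]: "homothety c s (homothety c t x) = homothety c (s * t) x"
  by (simp add: homothety_def algebra_simps)

lemma homothety_eq_affinity: "homothety c t = (\<lambda>x. (1 - t) *\<^sub>R c + t *\<^sub>R x)"
  by (auto simp: homothety_def)

lemma open_homothety_image:
  fixes S :: "'a::real_normed_vector set"
  assumes "open S" "t \<noteq> 0"
  shows "open (homothety c t ` S)"
  unfolding homothety_eq_affinity using assms by (rule open_affinity)

lemma convex_homothety_image: "convex S \<Longrightarrow> convex (homothety c t ` S)"
  unfolding homothety_eq_affinity by (rule convex_affinity)

lemma homothety_mem_interior:
  fixes S :: "'a::euclidean_space set"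
  assumes "convex S" "c \<in> closure S" "x \<in> interior S" "0 < t" "t \<le> 1"
  shows "homothety c t x \<in> interior S"
proof -
  have "c - t *\<^sub>R (c - x) = homothety c t x"
    by (simp add: homothety_def algebra_simps)
  then show ?thesis
    using mem_interior_closure_convex_shrink[OF assms(1,3,2,4,5)] by simp
qed

lemma exists_homothety_preimage:
  fixes S :: "'a::real_normed_vector set"
  assumes "open S" "x \<in> S"
  obtains l z where "0 < l" "l < 1" "z \<in> S" "x = homothety c l z"
proof -
  obtain r where r: "0 < r" "ball x r \<subseteq> S"
    using assms open_contains_ball by blast
  define d where "d = r / (2 * (norm (x - c) + 1))"
  have pos: "0 < norm (x - c) + 1"
    by (simp add: add_nonneg_pos)
  have d: "0 < d" "d * norm (x - c) < r"
    using r pos by (simp_all add: d_def field_simps add_pos_nonneg)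
  have "dist x (homothety c (1 + d) x) = d * norm (x - c)"
    using d by (simp add: homothety_def dist_norm algebra_simps flip: scaleR_diff_right)
  then have "homothety c (1 + d) x \<in> S"
    using d r by auto
  moreover have "x = homothety c (1 / (1 + d)) (homothety c (1 + d) x)"
    using d by simp
  ultimately show thesis
    using d by (intro that[of "1 / (1 + d)"]) auto
qed

lemma measure_homothety_image:
  fixes S :: "'a::euclidean_space set"
  shows "measure lebesgue (homothety c t ` S) = \<bar>t\<bar> ^ DIM('a) * measure lebesgue S"
  using measure_lebesgue_affine[of t "(1 - t) *\<^sub>R c" S]
  by (simp add: homothety_eq_affinity add.commute)

lemma measure_open_pos:
  fixes S :: "'a::euclidean_space set"
  assumes "bounded S" "open S" "S \<noteq> {}"
  shows "0 < measure lebesgue S"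
  using assms open_not_negligible negligible_iff_measure0 lmeasurable_open zero_less_measure_iff
  by metis

lemma homothety_image_neq:
  fixes S :: "'a::euclidean_space set"
  assumes "bounded S" "open S" "S \<noteq> {}" "0 \<le> t" "t < 1"
  shows "homothety c t ` S \<noteq> S"
proof
  assume "homothety c t ` S = S"
  then have "t ^ DIM('a) * measure lebesgue S = measure lebesgue S"
    using measure_homothety_image[of c t S] assms(4) by simp
  moreover have "t ^ DIM('a) < 1"
    using assms(4,5) by (simp add: power_less_one_iff)
  ultimately show False
    using measure_open_pos[OF assms(1-3)] by simp
qed

lemma integral_eq_0_open_imp_0:
  fixes f :: "'a::euclidean_space \<Rightarrow> real"
  assumes "open S" "continuous_on S f" "\<And>x. x \<in> S \<Longrightarrow> 0 \<le> f x"
    and "f integrable_on S" "integral S f = 0" "x \<in> S"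
  shows "f x = 0"
proof -
  obtain a b where ab: "cbox a b \<subseteq> S" "x \<in> box a b"
    using open_contains_cbox assms(1,6) by metis
  have cont: "continuous_on (cbox a b) f"
    using assms(2) ab(1) by (rule continuous_on_subset)
  then have int: "f integrable_on cbox a b"
    by (rule integrable_continuous)
  have "integral (cbox a b) f \<le> integral S f"
    using ab(1) assms(3,4) by (intro integral_subset_le int) auto
  moreover have "0 \<le> integral (cbox a b) f"
    using ab(1) assms(3) by (intro integral_nonneg int) auto
  ultimately have "(f has_integral 0) (cbox a b)"
    using assms(5) integrable_integral[OF int] by simp
  then show ?thesis
    using ab box_subset_cbox assms(3)
    by (intro has_integral_0_cbox_imp_0[OF cont]) blast+
qed

lemma lebesgue_homothety:
  fixes c :: "'a::euclidean_space"
  assumes "0 < t"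
  shows "lebesgue = density (distr lebesgue lebesgue (homothety c t)) (\<lambda>_. ennreal (t ^ DIM('a)))"
    and "homothety c t \<in> lebesgue \<rightarrow>\<^sub>M lebesgue"
proof -
  have "(\<lambda>x. (1 - t) *\<^sub>R c + (\<Sum>j\<in>Basis. (t * (x \<bullet> j)) *\<^sub>R j)) = homothety c t"
    unfolding homothety_eq_affinity scaleR_scaleR[symmetric] scaleR_sum_right[symmetric]
      euclidean_representation ..
  then show "lebesgue = density (distr lebesgue lebesgue (homothety c t))
      (\<lambda>_. ennreal (t ^ DIM('a)))" and "homothety c t \<in> lebesgue \<rightarrow>\<^sub>M lebesgue"
    using lebesgue_affine_euclidean[of "\<lambda>_. t" "(1 - t) *\<^sub>R c"]
      lebesgue_affine_measurable[of "\<lambda>_. t" "(1 - t) *\<^sub>R c"] assms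
    by simp_all
qed

lemma integral_homothety:
  fixes f :: "'a::euclidean_space \<Rightarrow> real"
  assumes t: "0 < t" and f: "f absolutely_integrable_on homothety c t ` S"
  shows "(\<lambda>x. f (homothety c t x)) absolutely_integrable_on S"
    and "integral S (\<lambda>x. f (homothety c t x)) = integral (homothety c t ` S) f / t ^ DIM('a)"
proof -
  let ?T = "homothety c t"
  note lebesgue_T = lebesgue_homothety(1)[OF t, of c] and T_meas = lebesgue_homothety(2)[OF t, of c]
  have "inj ?T"
    using t by (intro injI) (simp add: homothety_def)
  then have ind: "indicator (?T ` S) (?T x) = indicator S x" for x :: 'a
    by (simp add: indicator_def inj_image_mem_iff)
  define g where "g = (\<lambda>x. indicator (?T ` S) x *\<^sub>R f x)"
  have g: "integrable lebesgue g"
    using f unfolding g_def set_integrable_def .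
  then have g_meas: "g \<in> borel_measurable lebesgue"
    by auto
  have "integrable (density (distr lebesgue lebesgue ?T) (\<lambda>_. ennreal (t ^ DIM('a)))) g"
    using g lebesgue_T by simp
  then have "integrable (distr lebesgue lebesgue ?T) (\<lambda>x. t ^ DIM('a) *\<^sub>R g x)"
    using t g_meas by (subst (asm) integrable_density) auto
  then have "integrable (distr lebesgue lebesgue ?T)
      (\<lambda>x. (1 / t ^ DIM('a)) *\<^sub>R (t ^ DIM('a) *\<^sub>R g x))"
    by (rule integrable_scaleR_right)
  then have "integrable (distr lebesgue lebesgue ?T) g"
    using t by simp
  then have "integrable lebesgue (\<lambda>x. g (?T x))"
    using T_meas g_meas by (simp add: integrable_distr_eq)
  then show int: "(\<lambda>x. f (?T x)) absolutely_integrable_on S"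
    by (simp add: set_integrable_def g_def ind)
  have "integral\<^sup>L lebesgue g
      = integral\<^sup>L (density (distr lebesgue lebesgue ?T) (\<lambda>_. ennreal (t ^ DIM('a)))) g"
    using lebesgue_T by simp
  also have "\<dots> = integral\<^sup>L (distr lebesgue lebesgue ?T) (\<lambda>x. t ^ DIM('a) *\<^sub>R g x)"
    using t g_meas by (subst integral_density) auto
  also have "\<dots> = t ^ DIM('a) * integral\<^sup>L lebesgue (\<lambda>x. g (?T x))"
    using T_meas g_meas by (subst integral_distr) auto
  finally have "integral\<^sup>L lebesgue g = t ^ DIM('a) * integral\<^sup>L lebesgue (\<lambda>x. g (?T x))" .
  moreover have "(\<lambda>x. g (?T x)) = (\<lambda>x. indicator S x *\<^sub>R f (?T x))"
    by (simp add: g_def ind)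
  ultimately have "integral (?T ` S) f = t ^ DIM('a) * integral S (\<lambda>x. f (?T x))"
    using set_lebesgue_integral_eq_integral(2)[OF f] set_lebesgue_integral_eq_integral(2)[OF int]
    unfolding set_lebesgue_integral_def g_def by simp
  then show "integral S (\<lambda>x. f (?T x)) = integral (?T ` S) f / t ^ DIM('a)"
    using t by simp
qed

lemma frequently_less_if_lsc_ext_less:
  assumes "lsc_ext P f y < ereal c"
  shows "\<exists>\<^sub>F x in at y within P. f x < c"
proof (rule ccontr)
  assume "\<not> (\<exists>\<^sub>F x in at y within P. f x < c)"
  then have "\<forall>\<^sub>F x in at y within P. ereal c \<le> ereal (f x)"
    by (simp add: not_frequently not_less)
  then have "ereal c \<le> lsc_ext P f y"
    unfolding lsc_ext_def by (rule Liminf_bounded)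
  with assms show False
    by simp
qed

lemma convex_on_homothety_le:
  fixes \<phi> :: "'a::euclidean_space \<Rightarrow> real"
  assumes P: "open P" "convex P" and \<phi>: "convex_on P \<phi>"
    and y: "y \<in> closure P" "lsc_ext P \<phi> y \<le> ereal m"
    and x: "x \<in> P" and t: "0 < t" "t \<le> 1"
  shows "\<phi> (homothety y t x) \<le> (1 - t) * m + t * \<phi> x"
proof (rule field_le_epsilon)
  fix e :: real
  assume e: "0 < e"
  define z where "z = homothety y t x"
  have "z \<in> P"
    using homothety_mem_interior[OF P(2) y(1), of x t] x t interior_open[OF P(1)]
    by (simp add: z_def)
  then obtain d where d: "0 < d" "\<And>w. w \<in> P \<Longrightarrow> dist w z < d \<Longrightarrow> dist (\<phi> w) (\<phi> z) < e / 2"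
    using convex_on_continuous[OF P(1) \<phi>] e unfolding continuous_on_iff
    by (metis half_gt_zero)
  have "\<exists>\<^sub>F v in at y within P. \<phi> v < m + e / 2"
    using e y(2) by (intro frequently_less_if_lsc_ext_less) (simp add: le_less_trans)
  then obtain v where v: "v \<in> P" "dist v y < d" "\<phi> v < m + e / 2"
    unfolding frequently_at using d(1) by blast
  define w where "w = (1 - t) *\<^sub>R v + t *\<^sub>R x"
  have "w \<in> P"
    using convexD[OF P(2) v(1) x, of "1 - t" t] t by (simp add: w_def)
  moreover have "w - z = (1 - t) *\<^sub>R (v - y)"
    by (simp add: w_def z_def homothety_def algebra_simps)
  then have "dist w z \<le> dist v y"
    using t by (simp add: dist_norm mult_left_le_one_le)
  ultimately have "\<bar>\<phi> w - \<phi> z\<bar> < e / 2"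
    using d(2) v(2) by (simp add: dist_real_def)
  moreover have "\<phi> w \<le> (1 - t) * \<phi> v + t * \<phi> x"
    using convex_onD[OF \<phi>, of t v x] t v(1) x by (simp add: w_def)
  moreover have "(1 - t) * \<phi> v \<le> (1 - t) * m + (1 - t) * (e / 2)"
    using mult_left_mono[OF less_imp_le[OF v(3)], of "1 - t"] t by (simp add: distrib_left)
  moreover have "(1 - t) * (e / 2) \<le> e / 2"
    using t e by (simp add: mult_left_le_one_le)
  ultimately show "\<phi> (homothety y t x) \<le> (1 - t) * m + t * \<phi> x + e"
    unfolding z_def by linarith
qed

lemma homogeneous_if_subhomogeneous_self_similar:
  fixes k :: "real \<Rightarrow> real"
  assumes t0: "0 < t0" "t0 < 1"
    and sub: "\<And>r s. 0 < r \<Longrightarrow> r \<le> 1 \<Longrightarrow> 0 < s \<Longrightarrow> s \<le> 1 \<Longrightarrow> k (r * s) \<le> r * k s"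
    and self_similar: "\<And>s. 0 < s \<Longrightarrow> s \<le> 1 \<Longrightarrow> k (t0 * s) = t0 * k s"
    and t: "0 < t" "t \<le> 1"
  shows "k t = t * k 1"
proof -
  have pow: "k (t0 ^ m) = t0 ^ m * k 1" for m
  proof (induction m)
    case (Suc m)
    have "0 < t0 ^ m" "t0 ^ m \<le> 1"
      using t0 by (simp_all add: power_le_one)
    then show ?case
      using self_similar[of "t0 ^ m"] Suc by simp
  qed simp
  obtain m where m: "t0 ^ m < t"
    using real_arch_pow_inv[OF t(1) t0(2)] by blast
  have "t0 ^ m * k 1 = k ((t0 ^ m / t) * t)"
    using pow t by simp
  also have "\<dots> \<le> (t0 ^ m / t) * k t"
    using m t t0 by (intro sub) simp_all
  finally have "t * k 1 \<le> k t"
    using t t0 by (simp add: field_simps)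
  moreover have "k t \<le> t * k 1"
    using sub[of t 1] t by simp
  ultimately show ?thesis
    by linarith
qed

locale convex_vertex =
  fixes P :: "'a::euclidean_space set" and \<phi> :: "'a \<Rightarrow> real" and y :: 'a
  assumes open_P: "open P" and convex_P: "convex P" and convex_\<phi>: "convex_on P \<phi>"
    and y_closure: "y \<in> closure P" and lsc_ext_y: "lsc_ext P \<phi> y \<le> -1"
begin

lemma continuous_\<phi>: "continuous_on P \<phi>"
  using open_P convex_\<phi> by (rule convex_on_continuous)

lemma P_nonempty: "P \<noteq> {}"
  using y_closure by auto

lemma homothety_mem:
  assumes "x \<in> P" "0 < t" "t \<le> 1"
  shows "homothety y t x \<in> P"
  using homothety_mem_interior[OF convex_P y_closure] assms interior_open[OF open_P] by simp

lemma homothety_image_subset: "0 < t \<Longrightarrow> t \<le> 1 \<Longrightarrow> homothety y t ` P \<subseteq> P"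
  using homothety_mem by blast

lemma homothety_le:
  assumes "x \<in> P" "0 < t" "t \<le> 1"
  shows "\<phi> (homothety y t x) + 1 \<le> t * (\<phi> x + 1)"
proof -
  have "lsc_ext P \<phi> y \<le> ereal (-1)"
    using lsc_ext_y by (simp add: one_ereal_def)
  from convex_on_homothety_le[OF open_P convex_P convex_\<phi> y_closure this assms]
  show ?thesis
    by (simp add: algebra_simps)
qed

end

locale self_similar_vertex = convex_vertex +
  fixes t :: real
  assumes t_pos: "0 < t" and t_less_1: "t < 1"
    and scaling: "x \<in> P \<Longrightarrow> \<phi> (homothety y t x) + 1 = t * (\<phi> x + 1)"
    and nonpos_on_shrunk: "x \<in> homothety y t ` P \<Longrightarrow> \<phi> x \<le> 0"
    and nonneg_off_shrunk: "x \<in> P \<Longrightarrow> x \<notin> closure (homothety y t ` P) \<Longrightarrow> 0 \<le> \<phi> x"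
begin

lemma homogeneous:
  assumes x: "x \<in> P" and s: "0 < s" "s \<le> 1"
  shows "\<phi> (homothety y s x) + 1 = s * (\<phi> x + 1)"
proof -
  have "\<phi> (homothety y s x) + 1 = s * (\<phi> (homothety y 1 x) + 1)"
  proof (rule homogeneous_if_subhomogeneous_self_similar[OF t_pos t_less_1 _ _ s])
    fix r s' :: real
    assume "0 < r" "r \<le> 1" "0 < s'" "s' \<le> 1"
    then show "\<phi> (homothety y (r * s') x) + 1 \<le> r * (\<phi> (homothety y s' x) + 1)"
      using homothety_le[OF homothety_mem[OF x]] by simp
  next
    fix s' :: real
    assume "0 < s'" "s' \<le> 1"
    then show "\<phi> (homothety y (t * s') x) + 1 = t * (\<phi> (homothety y s' x) + 1)"
      using scaling[OF homothety_mem[OF x]] by simp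
  qed
  then show ?thesis
    by simp
qed

lemma homogeneous_within:
  assumes z: "z \<in> P" and s: "0 < s" and sz: "homothety y s z \<in> P"
  shows "\<phi> (homothety y s z) + 1 = s * (\<phi> z + 1)"
proof (cases "s \<le> 1")
  case True
  then show ?thesis
    using homogeneous[OF z s] by simp
next
  case False
  have "\<phi> (homothety y (1 / s) (homothety y s z)) + 1 = (1 / s) * (\<phi> (homothety y s z) + 1)"
    using False by (intro homogeneous[OF sz]) auto
  then show ?thesis
    using s by (simp add: field_simps)
qed

lemma negative_iff_mem_shrunk:
  assumes x: "x \<in> P"
  shows "\<phi> x < 0 \<longleftrightarrow> x \<in> homothety y t ` P"
proof
  have open_shrunk: "open (homothety y t ` P)"
    using open_P t_pos by (intro open_homothety_image) auto
  assume "x \<in> homothety y t ` P"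
  then obtain l z where l: "0 < l" "l < 1" and z: "z \<in> homothety y t ` P"
    and xz: "x = homothety y l z"
    using exists_homothety_preimage[OF open_shrunk] by metis
  have "z \<in> P"
    using z homothety_image_subset[OF t_pos less_imp_le[OF t_less_1]] by blast
  then have "\<phi> x + 1 = l * (\<phi> z + 1)"
    using homogeneous l xz by simp
  also have "\<dots> \<le> l"
    using nonpos_on_shrunk[OF z] l by (simp add: mult_left_le)
  finally show "\<phi> x < 0"
    using l by simp
next
  assume neg: "\<phi> x < 0"
  have "open {x \<in> P. \<phi> x < 0}"
    using continuous_open_preimage[OF continuous_\<phi> open_P, of "{..<0}"]
    by (simp add: vimage_def Int_def conj_commute)
  moreover have "{x \<in> P. \<phi> x < 0} \<subseteq> closure (homothety y t ` P)"
    using nonneg_off_shrunk by force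
  ultimately have "{x \<in> P. \<phi> x < 0} \<subseteq> interior (closure (homothety y t ` P))"
    by (simp add: interior_maximal)
  also have "\<dots> = homothety y t ` P"
    using convex_interior_closure[OF convex_homothety_image[OF convex_P]]
      interior_open[OF open_homothety_image[OF open_P]] t_pos by simp
  finally show "x \<in> homothety y t ` P"
    using x neg by blast
qed

lemma mem_homothety_image_if_less:
  assumes "x \<in> P" "\<phi> x + 1 < s" "t ^ k \<le> s"
  shows "x \<in> homothety y (t * s) ` P"
  \<comment> \<open>k bounds how often the level s must be rescaled by 1 / t, via the self-similarity,
    before it reaches 1.\<close>
  using assms
proof (induction k arbitrary: x s)
  case 0
  then have s: "0 < s" "1 / s \<le> 1"
    by simp_all
  let ?z = "homothety y (1 / s) x"
  have z: "?z \<in> P"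
    using homothety_mem[OF "0.prems"(1)] s by simp
  have "\<phi> ?z + 1 = (\<phi> x + 1) / s"
    using homogeneous[OF "0.prems"(1)] s by simp
  also have "\<dots> < 1"
    using "0.prems"(2) s(1) by (simp add: divide_less_eq_1_pos)
  finally have "\<phi> ?z < 0"
    by simp
  then obtain p where p: "p \<in> P" "?z = homothety y t p"
    using negative_iff_mem_shrunk[OF z] by blast
  have "x = homothety y s ?z"
    using s by simp
  also have "\<dots> = homothety y (t * s) p"
    by (simp add: p(2) mult.commute)
  finally show ?case
    using p(1) by blast
next
  case (Suc k)
  show ?case
  proof (cases "t ^ k \<le> s")
    case True
    then show ?thesis
      using Suc by blast
  next
    case False
    then have "s < 1"
      using t_pos t_less_1 power_le_one[of t k] by simp
    then obtain p where p: "p \<in> P" "x = homothety y t p"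
      using negative_iff_mem_shrunk[OF Suc.prems(1)] Suc.prems(2) by auto
    have "\<phi> x + 1 = t * (\<phi> p + 1)"
      using scaling[OF p(1)] p(2) by simp
    then have "\<phi> p + 1 < s / t" and "t ^ k \<le> s / t"
      using Suc.prems(2,3) t_pos by (simp_all add: field_simps)
    then have "p \<in> homothety y (t * (s / t)) ` P"
      by (rule Suc.IH[OF p(1)])
    then obtain q where q: "q \<in> P" "p = homothety y s q"
      using t_pos by auto
    show ?thesis
      using p(2) q by (simp add: mult.commute)
  qed
qed

lemma sublevel_eq:
  assumes a: "-1 < a" "a < 1 / t - 1"
  shows "{x \<in> P. \<phi> x < a} = homothety y (t * (a + 1)) ` P"
proof
  show "{x \<in> P. \<phi> x < a} \<subseteq> homothety y (t * (a + 1)) ` P"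
  proof
    fix x
    assume x: "x \<in> {x \<in> P. \<phi> x < a}"
    obtain k where "t ^ k < a + 1"
      using real_arch_pow_inv[of "a + 1" t] a t_less_1 by auto
    then show "x \<in> homothety y (t * (a + 1)) ` P"
      using x mem_homothety_image_if_less[of x "a + 1" k] by simp
  qed
next
  have l: "0 < t * (a + 1)" "t * (a + 1) < 1"
    using a t_pos by (simp, simp add: field_simps)
  show "homothety y (t * (a + 1)) ` P \<subseteq> {x \<in> P. \<phi> x < a}"
  proof clarify
    fix z
    assume z: "z \<in> P"
    let ?q = "homothety y t z"
    have q: "?q \<in> P" "\<phi> ?q < 0"
      using homothety_mem[OF z t_pos] t_less_1 negative_iff_mem_shrunk z by auto
    have x: "homothety y (t * (a + 1)) z \<in> P"
      using homothety_mem[OF z] l by simp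
    moreover have "homothety y (t * (a + 1)) z = homothety y (a + 1) ?q"
      by (simp add: mult.commute)
    ultimately have "\<phi> (homothety y (t * (a + 1)) z) + 1 = (a + 1) * (\<phi> ?q + 1)"
      using homogeneous_within[OF q(1), of "a + 1"] a by simp
    also have "\<dots> < a + 1"
      using q(2) a by simp
    finally show "homothety y (t * (a + 1)) z \<in> P \<and> \<phi> (homothety y (t * (a + 1)) z) < a"
      using x by simp
  qed
qed

lemma value_less_bound:
  assumes x: "x \<in> P"
  shows "\<phi> x < 1 / t - 1"
proof -
  obtain l z where l: "0 < l" "l < 1" and z: "z \<in> P" and xz: "x = homothety y l z"
    using exists_homothety_preimage[OF open_P x] by metis
  have "-1 < l / t - 1" "l / t - 1 < 1 / t - 1"
    using l t_pos by (simp_all add: divide_strict_right_mono)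
  moreover from this have "x \<in> {x \<in> P. \<phi> x < l / t - 1}"
    using sublevel_eq xz z t_pos by auto
  ultimately show ?thesis
    by simp
qed

lemma exists_value_ge:
  assumes "bounded P" "-1 < a" "a < 1 / t - 1"
  shows "\<exists>x\<in>P. a \<le> \<phi> x"
proof (rule ccontr)
  assume "\<not> (\<exists>x\<in>P. a \<le> \<phi> x)"
  then have "P = homothety y (t * (a + 1)) ` P"
    using sublevel_eq[OF assms(2,3)] by (auto simp: not_le)
  moreover have "t * (a + 1) < 1"
    using assms(3) t_pos by (simp add: field_simps)
  ultimately show False
    using homothety_image_neq[OF assms(1) open_P P_nonempty, of "t * (a + 1)" y] assms(2) t_pos
    by simp
qed

lemma SUP_value_eq:
  assumes "bounded P"
  shows "(SUP x\<in>P. ereal (\<phi> x)) = ereal (1 / t - 1)"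
proof (rule antisym)
  show "(SUP x\<in>P. ereal (\<phi> x)) \<le> ereal (1 / t - 1)"
    using value_less_bound by (intro SUP_least) (simp add: less_imp_le)
  have bound_pos: "0 < 1 / t - 1"
    using t_pos t_less_1 by simp
  show "ereal (1 / t - 1) \<le> (SUP x\<in>P. ereal (\<phi> x))"
    unfolding le_SUP_iff
  proof (intro allI impI)
    fix w
    assume w: "w < ereal (1 / t - 1)"
    define a where "a = (max (real_of_ereal w) (-1) + (1 / t - 1)) / 2"
    have a: "-1 < a" "a < 1 / t - 1" "w < ereal a"
      using w bound_pos by (cases w; simp add: a_def)+
    then obtain x where "x \<in> P" "a \<le> \<phi> x"
      using exists_value_ge[OF assms] by blast
    then show "\<exists>x\<in>P. w < ereal (\<phi> x)"
      using a(3) order.strict_trans2 ereal_less_eq(3) by blast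
  qed
qed

end

locale integrable_convex_vertex = convex_vertex +
  assumes bounded_P: "bounded P" and integrable_\<phi>: "\<phi> absolutely_integrable_on P"
begin

lemma absolutely_integrable_on_open_subset:
  assumes "open A" "A \<subseteq> P"
  shows "\<phi> absolutely_integrable_on A"
  using set_integrable_subset[OF integrable_\<phi>] assms by (simp add: borel_open)

lemma homothety_defect_has_integral:
  assumes t: "0 < t" "t \<le> 1"
  shows "((\<lambda>x. t * (\<phi> x + 1) - (\<phi> (homothety y t x) + 1)) has_integral
      t * integral P \<phi> - integral (homothety y t ` P) \<phi> / t ^ DIM('a)
        - (1 - t) * measure lebesgue P) P"
proof -
  have "\<phi> absolutely_integrable_on homothety y t ` P"
    using open_homothety_image[OF open_P] homothety_image_subset[OF t] t
    by (intro absolutely_integrable_on_open_subset) auto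
  from integral_homothety[OF t(1) this]
  have "((\<lambda>x. \<phi> (homothety y t x)) has_integral integral (homothety y t ` P) \<phi> / t ^ DIM('a)) P"
    by (simp add: absolutely_integrable_on_def has_integral_integrable_integral)
  moreover have "(\<phi> has_integral integral P \<phi>) P"
    using integrable_\<phi> by (simp add: absolutely_integrable_on_def has_integral_integrable_integral)
  moreover have "((\<lambda>x. 1) has_integral measure lebesgue P) P"
    using lmeasurable_open[OF bounded_P open_P]
    by (simp add: has_integral_integrable_integral lmeasure_integral integrable_on_const)
  ultimately have "((\<lambda>x. t * \<phi> x - \<phi> (homothety y t x) - (1 - t) * 1) has_integral
      t * integral P \<phi> - integral (homothety y t ` P) \<phi> / t ^ DIM('a)
        - (1 - t) * measure lebesgue P) P"
    by (intro has_integral_diff has_integral_mult_right)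
  then show ?thesis
    by (simp add: algebra_simps)
qed

lemma extremal_integrals_vanish:
  assumes mean_zero: "integral P \<phi> = 0" and t: "0 < t" "t < 1"
    and extremal: "integral P (\<lambda>x. \<bar>\<phi> x\<bar>) = 2 * (1 - t) * t ^ DIM('a) * measure lebesgue P"
  defines "Q \<equiv> homothety y t ` P"
  shows "integral P (\<lambda>x. t * (\<phi> x + 1) - (\<phi> (homothety y t x) + 1)) = 0"
    and "integral Q (\<lambda>x. (\<bar>\<phi> x\<bar> + \<phi> x) / 2) = 0"
    and "integral (P - closure Q) (\<lambda>x. (\<bar>\<phi> x\<bar> - \<phi> x) / 2) = 0"
proof -
  define U where "U = P - closure Q"
  let ?defect = "\<lambda>x. t * (\<phi> x + 1) - (\<phi> (homothety y t x) + 1)"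
  let ?pos = "\<lambda>x. (\<bar>\<phi> x\<bar> + \<phi> x) / 2" and ?neg = "\<lambda>x. (\<bar>\<phi> x\<bar> - \<phi> x) / 2"
  have Q: "open Q" "Q \<subseteq> P"
    using open_homothety_image[OF open_P] homothety_image_subset[of t] t by (auto simp: Q_def)
  have U: "open U" "U \<subseteq> P" and disjoint: "Q \<inter> U = {}"
    using closure_subset by (auto simp: U_def open_P)
  have int: "\<phi> integrable_on A" "(\<lambda>x. \<bar>\<phi> x\<bar>) integrable_on A" if "open A" "A \<subseteq> P" for A
    using absolutely_integrable_on_open_subset[OF that] by (auto simp: absolutely_integrable_on_def)
  have pos_int: "?pos integrable_on A" and neg_int: "?neg integrable_on A" if "open A" "A \<subseteq> P" for A
    using int[OF that] by (auto intro!: integrable_on_divide integrable_add integrable_diff)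
  have defect:
    "(?defect has_integral - integral Q \<phi> / t ^ DIM('a) - (1 - t) * measure lebesgue P) P"
    using homothety_defect_has_integral[OF t(1) less_imp_le[OF t(2)]] by (simp add: mean_zero Q_def)
  \<comment> \<open>The extremal identity gives the negative part exactly the mass that the defect inequality
    requires of it, which leaves no room for the three nonnegative terms below.\<close>
  have "integral P ?neg = (integral P (\<lambda>x. \<bar>\<phi> x\<bar>) - integral P \<phi>) / 2"
    using int[OF open_P order.refl] by (simp add: Henstock_Kurzweil_Integration.integral_diff)
  then have neg_P: "integral P ?neg = (1 - t) * t ^ DIM('a) * measure lebesgue P"
    by (simp add: extremal mean_zero)
  have "integral Q ?neg + integral U ?neg = integral (Q \<union> U) ?neg"
    using integral_Un[OF neg_int[OF Q] neg_int[OF U]] disjoint by simp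
  also have "\<dots> \<le> integral P ?neg"
    using Q U disjoint by (intro integral_subset_le integrable_Un neg_int open_P) auto
  finally have neg_QU: "integral Q ?neg + integral U ?neg \<le> integral P ?neg" .
  have "integral Q ?pos - integral Q ?neg = integral Q (\<lambda>x. ?pos x - ?neg x)"
    by (rule Henstock_Kurzweil_Integration.integral_diff[symmetric, OF pos_int[OF Q] neg_int[OF Q]])
  also have "(\<lambda>x. ?pos x - ?neg x) = \<phi>"
    by (simp add: field_simps)
  finally have
    "t ^ DIM('a) * integral P ?defect = integral Q ?neg - integral Q ?pos - integral P ?neg"
    using integral_unique[OF defect] neg_P t by (simp add: field_simps)
  moreover have "0 \<le> t ^ DIM('a) * integral P ?defect"
    using defect homothety_le t
    by (intro mult_nonneg_nonneg integral_nonneg) (auto dest: has_integral_integrable)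
  moreover have "0 \<le> integral Q ?pos" "0 \<le> integral U ?neg"
    using pos_int[OF Q] neg_int[OF U] by (auto intro!: integral_nonneg)
  ultimately have "t ^ DIM('a) * integral P ?defect = 0" "integral Q ?pos = 0" "integral U ?neg = 0"
    using neg_QU by linarith+
  then show "integral P ?defect = 0" "integral Q ?pos = 0" "integral (P - closure Q) ?neg = 0"
    using t by (simp_all add: U_def)
qed

lemma self_similar_if_extremal:
  assumes mean_zero: "integral P \<phi> = 0" and t: "0 < t" "t < 1"
    and extremal: "integral P (\<lambda>x. \<bar>\<phi> x\<bar>) = 2 * (1 - t) * t ^ DIM('a) * measure lebesgue P"
  shows "self_similar_vertex P \<phi> y t"
proof -
  let ?Q = "homothety y t ` P"
  note vanish = extremal_integrals_vanish[OF assms]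
  have Q: "open ?Q" "?Q \<subseteq> P" and U: "open (P - closure ?Q)" "P - closure ?Q \<subseteq> P"
    using open_homothety_image[OF open_P] homothety_image_subset[of t] t open_P by auto
  have cont: "continuous_on A \<phi>" if "A \<subseteq> P" for A
    using continuous_on_subset[OF continuous_\<phi> that] .
  have cont_shrink: "continuous_on P (\<lambda>x. \<phi> (homothety y t x))"
    using homothety_image_subset[of t] t unfolding homothety_eq_affinity
    by (intro continuous_on_compose2[OF continuous_\<phi>] continuous_intros) auto
  have scaling: "\<phi> (homothety y t x) + 1 = t * (\<phi> x + 1)" if "x \<in> P" for x
  proof -
    have "t * (\<phi> x + 1) - (\<phi> (homothety y t x) + 1) = 0"
      using homothety_defect_has_integral[of t] homothety_le[of _ t] t
      by (intro integral_eq_0_open_imp_0[OF open_P _ _ _ vanish(1) that] continuous_intros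
          cont_shrink continuous_\<phi>) auto
    then show ?thesis
      by simp
  qed
  have nonpos: "\<phi> x \<le> 0" if "x \<in> ?Q" for x
  proof -
    have "(\<bar>\<phi> x\<bar> + \<phi> x) / 2 = 0"
      using absolutely_integrable_on_open_subset[OF Q] Q
      by (intro integral_eq_0_open_imp_0[OF Q(1) _ _ _ vanish(2) that] continuous_intros cont
          integrable_on_divide integrable_add) (auto simp: absolutely_integrable_on_def)
    then show ?thesis
      by (simp add: abs_if split: if_splits)
  qed
  have nonneg: "0 \<le> \<phi> x" if "x \<in> P" "x \<notin> closure ?Q" for x
  proof -
    have "(\<bar>\<phi> x\<bar> - \<phi> x) / 2 = 0"
      using absolutely_integrable_on_open_subset[OF U] U that
      by (intro integral_eq_0_open_imp_0[OF U(1) _ _ _ vanish(3)] continuous_intros cont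
          integrable_on_divide integrable_diff) (auto simp: absolutely_integrable_on_def)
    then show ?thesis
      by (simp add: abs_if split: if_splits)
  qed
  show ?thesis
    by unfold_locales (use t scaling nonpos nonneg in auto)
qed

end

theorem proposition3p2:
  fixes P :: "'a::euclidean_space set" and \<phi> :: "'a \<Rightarrow> real" and y :: 'a
  assumes "bounded P" and "open P" and "convex P"
    and "\<phi> \<in> extremizers P"
    and "y \<in> closure P"
    and "(INF x\<in>P. \<phi> x) = -1" and "lsc_ext P \<phi> y = -1"
  shows "(SUP x\<in>P. ereal (\<phi> x)) = ereal (1 / real DIM('a))
    \<and> (\<forall>a::real. -1 < a \<and> a < 1 / real DIM('a) \<longrightarrow>
         {x\<in>P. \<phi> x < a} =
           (\<lambda>z. ((1 - a * real DIM('a)) / (1 + real DIM('a))) *\<^sub>R y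
                 + ((real DIM('a) * a + real DIM('a)) / (1 + real DIM('a))) *\<^sub>R z) ` P)"
proof -
  define n where "n = real DIM('a)"
  define t where "t = n / (n + 1)"
  have n: "0 < n"
    by (simp add: n_def)
  have t: "0 < t" "t < 1" "1 / t - 1 = 1 / n"
    using n by (simp_all add: t_def field_simps)
  obtain convex_\<phi>: "convex_on P \<phi>" and integrable: "\<phi> absolutely_integrable_on P"
    and mean_zero: "integral P \<phi> = 0"
    and extremal: "2 / (n + 1) * t ^ DIM('a) = integral P (\<lambda>x. \<bar>\<phi> x\<bar>) / measure lebesgue P"
    using assms(4,6) by (simp add: extremizers_def n_def t_def)
  interpret integrable_convex_vertex P \<phi> y
    using assms convex_\<phi> integrable by unfold_locales simp_all
  have "0 < measure lebesgue P"
    using measure_open_pos[OF assms(1,2) P_nonempty] .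
  then have "integral P (\<lambda>x. \<bar>\<phi> x\<bar>) = 2 * (1 - t) * t ^ DIM('a) * measure lebesgue P"
    using extremal n by (simp add: t_def field_simps)
  then interpret self_similar_vertex P \<phi> y t
    using self_similar_if_extremal[OF mean_zero t(1,2)] by simp
  have "homothety y (t * (a + 1))
      = (\<lambda>z. ((1 - a * n) / (1 + n)) *\<^sub>R y + ((n * a + n) / (1 + n)) *\<^sub>R z)" for a
    using n by (auto simp: homothety_def t_def field_simps)
  then show ?thesis
    using SUP_value_eq[OF assms(1)] sublevel_eq t(3) by (simp add: n_def)
qed

end
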